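(* Let $n\ge 6$. Among all cycle barbells $CB(k,a,b)$ (with integers $a,b\ge3$, $k\ge2$) having exactly $n$ vertices, the non-backtracking Kemeny's constant $\mathscr{K}_{nb}$ is maximized at $CB(2,\lceil n/2\rceil,\lfloor n/2\rfloor)$. Moreover, for $n$ even, \[ \mathscr{K}_{nb}(CB(2,n/2,n/2))=\frac{11n^2+14n+2}{4(n+1)}, \] and for $n$ odd, \[ \mathscr{K}_{nb}(CB(2,(n+1)/2,(n-1)/2))=\frac{11n^2+14n+1}{4(n+1)}. \]
   Context: The cycle barbell $CB(k,a,b)$ is the graph obtained from a cycle $C_a$, a path $P_k$ on $k$ vertices and a cycle $C_b$ by identifying one endpoint of the path with a vertex of $C_a$ and the other endpoint with a vertex of $C_b$. It has $a+b+k-2$ vertices and $a+b+k-1$ edges. Kemeny's constant of an irreducible finite Markov chain with transition matrix $P$ whose eigenvalues (with multiplicity) are $1=\rho_1,\rho_2,\dots,\rho_N$ (with $1$ simple) is $\mathscr{K}(P)=\sum_{i=2}^{N}\frac{1}{1-\rho_i}$. $\mathscr{K}_{nb}(G)$ is Kemeny's constant of the non-backtracking random walk on the arcs of $G$ (ordered pairs $(u,v)$ with $\{u,v\}$ an edge), where from $(u,v)$ one moves to $(v,w)$ with probability $1/(\deg(v)-1)$ for each neighbor $w\neq u$ of $v$. *)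

theory Defs
  imports "Jordan_Normal_Form.Char_Poly" "HOL-Library.Product_Lexorder"
begin

text \<open>Vertices of CB(k,a,b) are 0..a+b+k-3.
  Cycle C_a on 0..a-1; path P_k with vertices pv 0 = 0, pv j = a+j-1 (0<j<k);
  cycle C_b on a+k-2 .. a+k-2+b-1, whose vertex a+k-2 is the last path vertex.\<close>

definition cb_path_vertex :: "nat \<Rightarrow> nat \<Rightarrow> nat" where
  "cb_path_vertex a j = (if j = 0 then 0 else a + j - 1)"

definition cb_vertices :: "nat \<Rightarrow> nat \<Rightarrow> nat \<Rightarrow> nat set" where
  "cb_vertices k a b = {..< a + b + k - 2}"

definition cb_edges :: "nat \<Rightarrow> nat \<Rightarrow> nat \<Rightarrow> nat set set" where
  "cb_edges k a b =
     {{i, (i + 1) mod a} | i. i < a}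
   \<union> {{cb_path_vertex a j, cb_path_vertex a (j + 1)} | j. j + 1 < k}
   \<union> {{a + k - 2 + i, a + k - 2 + (i + 1) mod b} | i. i < b}"

definition arcs :: "nat set set \<Rightarrow> (nat \<times> nat) set" where
  "arcs E = {(u, v). {u, v} \<in> E}"

definition gdeg :: "nat set set \<Rightarrow> nat \<Rightarrow> nat" where
  "gdeg E v = card {w. {v, w} \<in> E}"

definition nb_matrix :: "nat set set \<Rightarrow> complex mat" where
  "nb_matrix E = (let as = sorted_list_of_set (arcs E) in
     mat (length as) (length as) (\<lambda>(i, j).
       let (u, v) = as ! i; (x, w) = as ! j in
       if x = v \<and> w \<noteq> u then 1 / of_nat (gdeg E v - 1) else 0))"

definition kemeny :: "complex mat \<Rightarrow> complex" where
  "kemeny P = sum_mset (image_mset (\<lambda>\<rho>. 1 / (1 - \<rho>)) (proots (char_poly P) - {#1#}))"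

definition kemeny_nb :: "nat set set \<Rightarrow> complex" where
  "kemeny_nb E = kemeny (nb_matrix E)"

end

theory Submission
  imports Defs
begin

text \<open>The non-backtracking walk on the arcs of \<open>CB(k,a,b)\<close> runs along six branches (the two
  orientations of each cycle and of the path), which meet at the two vertices of degree 3; inside a
  branch the walk is deterministic. Eliminating the deterministic steps reduces \<open>det (x I - P)\<close> to a
  power of \<open>x\<close> times a \<open>6 \<times> 6\<close> determinant, and the characteristic polynomial becomes
  \<open>(x^a - 1/2) (x^b - 1/2) (x^(2 (k - 1)) (x^a - 1/2) (x^b - 1/2) - 1/4)\<close>.
  Kemeny's constant, the sum of \<open>1 / (1 - \<rho>)\<close> over the roots other than the simple root 1, equals
  \<open>p'' 1 / (2 p' 1)\<close> for this polynomial \<open>p\<close>, which gives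
  \<open>K_nb = 2 (a + b) + m - 1/2 - (a^2 + b^2) / (2 m)\<close> with \<open>m = a + b + k - 1\<close> edges.
  For \<open>m = n + 1\<close> fixed this increases with \<open>a + b\<close> and decreases with \<open>a^2 + b^2\<close>, so the maximum
  is attained for \<open>k = 2\<close> and \<open>a\<close>, \<open>b\<close> as equal as possible.\<close>

section \<open>Matrices indexed by lists\<close>

definition indexed_mat :: "'i list \<Rightarrow> ('i \<Rightarrow> 'i \<Rightarrow> 'a) \<Rightarrow> 'a mat" where
  "indexed_mat xs F = mat (length xs) (length xs) (\<lambda>(i, j). F (xs ! i) (xs ! j))"

lemma indexed_mat_carrier [simp]: "indexed_mat xs F \<in> carrier_mat (length xs) (length xs)"
  and dim_row_indexed_mat [simp]: "dim_row (indexed_mat xs F) = length xs"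
  and dim_col_indexed_mat [simp]: "dim_col (indexed_mat xs F) = length xs"
  by (simp_all add: indexed_mat_def)

lemma index_indexed_mat [simp]:
  "i < length xs \<Longrightarrow> j < length xs \<Longrightarrow> indexed_mat xs F $$ (i, j) = F (xs ! i) (xs ! j)"
  by (simp add: indexed_mat_def)

lemma indexed_mat_map: "indexed_mat (map f xs) F = indexed_mat xs (\<lambda>s t. F (f s) (f t))"
  by (rule eq_matI) auto

lemma indexed_mat_upt: "indexed_mat [0..<n] F = mat n n (\<lambda>(i, j). F i j)"
  by (rule eq_matI) auto

lemma indexed_mat_cong:
  "(\<And>s t. s \<in> set xs \<Longrightarrow> t \<in> set xs \<Longrightarrow> F s t = G s t) \<Longrightarrow> indexed_mat xs F = indexed_mat xs G"
  by (rule eq_matI) auto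

lemma indexed_mat_mult:
  fixes F G :: "'i \<Rightarrow> 'i \<Rightarrow> 'a :: semiring_0"
  assumes "distinct xs"
  shows "indexed_mat xs F * indexed_mat xs G = indexed_mat xs (\<lambda>s t. \<Sum>m\<in>set xs. F s m * G m t)"
proof (rule eq_matI)
  let ?H = "indexed_mat xs (\<lambda>s t. \<Sum>m\<in>set xs. F s m * G m t)"
  fix i j assume "i < dim_row ?H" "j < dim_col ?H"
  then have i: "i < length xs" and j: "j < length xs" by auto
  have "(\<Sum>l<length xs. F (xs ! i) (xs ! l) * G (xs ! l) (xs ! j)) = (\<Sum>m\<in>set xs. F (xs ! i) m * G m (xs ! j))"
    by (rule sum.reindex_bij_betw[OF bij_betw_nth[OF assms]]) auto
  then show "(indexed_mat xs F * indexed_mat xs G) $$ (i, j) = ?H $$ (i, j)"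
    using i j by (simp add: scalar_prod_def atLeast0LessThan)
qed auto

lemma det_permute_rows_cols:
  fixes A :: "'a :: comm_ring_1 mat"
  assumes A: "A \<in> carrier_mat n n" and p: "p permutes {0..<n}"
  shows "det (mat n n (\<lambda>(i, j). A $$ (p i, p j))) = det A"
proof -
  define B where "B = mat n n (\<lambda>(i, j). A $$ (p i, j))"
  have B: "B \<in> carrier_mat n n" and Bt: "transpose_mat B \<in> carrier_mat n n" by (simp_all add: B_def)
  have p_less: "p i < n" if "i < n" for i using permutes_in_image[OF p] that by simp
  have "mat n n (\<lambda>(i, j). A $$ (p i, p j)) = transpose_mat (mat n n (\<lambda>(i, j). transpose_mat B $$ (p i, j)))"
    by (rule eq_matI) (auto simp: B_def p_less)
  then have "det (mat n n (\<lambda>(i, j). A $$ (p i, p j))) = det (mat n n (\<lambda>(i, j). transpose_mat B $$ (p i, j)))"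
    by (metis det_transpose mat_carrier)
  also have "\<dots> = signof p * det B"
    using det_permute_rows[OF Bt p] det_transpose[OF B] by simp
  also have "\<dots> = signof p * signof p * det A"
    using det_permute_rows[OF A p] by (simp add: B_def)
  also have "signof p * signof p = (1 :: 'a)"
    by (simp flip: of_int_mult)
  finally show ?thesis by simp
qed

lemma det_indexed_mat_reorder:
  fixes F :: "'i \<Rightarrow> 'i \<Rightarrow> 'a :: comm_ring_1"
  assumes "distinct xs" "distinct ys" "set xs = set ys"
  shows "det (indexed_mat ys F) = det (indexed_mat xs F)"
proof -
  have "mset ys = mset xs" using assms by (simp add: set_eq_iff_mset_eq_distinct)
  then obtain p where p: "p permutes {..<length xs}" and ys: "permute_list p xs = ys"
    by (rule mset_eq_permutation)
  have p_less: "p i < length xs" if "i < length xs" for i using permutes_in_image[OF p] that by simp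
  have "indexed_mat ys F = mat (length xs) (length xs) (\<lambda>(i, j). indexed_mat xs F $$ (p i, p j))"
    unfolding ys[symmetric] using p by (intro eq_matI) (auto simp: permute_list_nth p_less)
  then show ?thesis
    using det_permute_rows_cols[OF indexed_mat_carrier] p by (simp add: lessThan_atLeast0)
qed

lemma poly_char_poly_indexed_mat:
  fixes P :: "'i \<Rightarrow> 'i \<Rightarrow> 'a :: field"
  assumes "distinct xs"
  shows "poly (char_poly (indexed_mat xs P)) x = det (indexed_mat xs (\<lambda>s t. (if s = t then x else 0) - P s t))"
proof -
  have "- char_matrix (indexed_mat xs P) x = indexed_mat xs (\<lambda>s t. (if s = t then x else 0) - P s t)"
    using assms by (intro eq_matI) (auto simp: char_matrix_def nth_eq_iff_index_eq)
  then show ?thesis by (simp add: char_poly_matrix[OF indexed_mat_carrier])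
qed

text \<open>Sorting the index list by the rank makes such a matrix lower triangular.\<close>

lemma det_indexed_mat_ranked:
  fixes G :: "'i \<Rightarrow> 'i \<Rightarrow> 'a :: comm_ring_1" and r :: "'i \<Rightarrow> nat"
  assumes "distinct xs"
    and diag: "\<And>s. s \<in> set xs \<Longrightarrow> G s s = x"
    and off_diag: "\<And>s t. s \<in> set xs \<Longrightarrow> t \<in> set xs \<Longrightarrow> s \<noteq> t \<Longrightarrow> G s t \<noteq> 0 \<Longrightarrow> r t < r s"
  shows "det (indexed_mat xs G) = x ^ length xs"
proof -
  define ys where "ys = sort_key r xs"
  have ys: "distinct ys" "set ys = set xs" "length ys = length xs" "sorted (map r ys)"
    using assms(1) by (simp_all add: ys_def)
  have upper_zero: "indexed_mat ys G $$ (i, j) = 0" if "i < j" "j < length ys" for i j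
  proof (rule ccontr)
    assume nz: "indexed_mat ys G $$ (i, j) \<noteq> 0"
    have "ys ! i \<noteq> ys ! j" using that ys(1) by (simp add: nth_eq_iff_index_eq)
    moreover have "ys ! i \<in> set xs" "ys ! j \<in> set xs" using that ys(2,3) by (metis nth_mem order.strict_trans)+
    ultimately have "r (ys ! j) < r (ys ! i)" using nz that off_diag by simp
    moreover have "r (ys ! i) \<le> r (ys ! j)"
      using sorted_nth_mono[OF ys(4), of i j] that by simp
    ultimately show False by simp
  qed
  have "det (indexed_mat ys G) = prod_list (diag_mat (indexed_mat ys G))"
    by (rule det_lower_triangular[OF upper_zero indexed_mat_carrier])
  also have "diag_mat (indexed_mat ys G) = replicate (length xs) x"
    using diag ys(2,3) by (intro nth_equalityI) (auto simp: diag_mat_def, metis nth_mem)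
  also have "prod_list \<dots> = x ^ length xs" by simp
  finally show ?thesis using det_indexed_mat_reorder[OF assms(1) ys(1) ys(2)[symmetric], of G] by simp
qed

lemma det_indexed_mat_append_unit_cols:
  fixes G :: "'i \<Rightarrow> 'i \<Rightarrow> 'a :: idom"
  assumes distinct: "distinct (js @ rs)"
    and unit_cols: "\<And>s t. s \<in> set (js @ rs) \<Longrightarrow> t \<in> set rs \<Longrightarrow> G s t = (if s = t then 1 else 0)"
  shows "det (indexed_mat (js @ rs) G) = det (indexed_mat js G)"
proof -
  define C where "C = mat (length rs) (length js) (\<lambda>(i, j). G (rs ! i) (js ! j))"
  have "indexed_mat (js @ rs) G = four_block_mat (indexed_mat js G) (0\<^sub>m (length js) (length rs)) C (1\<^sub>m (length rs))"
    (is "_ = ?M")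
  proof (rule eq_matI)
    fix i j assume "i < dim_row ?M" "j < dim_col ?M"
    then have i: "i < length (js @ rs)" and j: "j < length (js @ rs)" by auto
    show "indexed_mat (js @ rs) G $$ (i, j) = ?M $$ (i, j)"
    proof (cases "j < length js")
      case False
      then have "(js @ rs) ! j \<in> set rs" using j by (simp add: nth_append)
      then have "G ((js @ rs) ! i) ((js @ rs) ! j) = (if i = j then 1 else 0)"
        using unit_cols[OF nth_mem[OF i]] nth_eq_iff_index_eq[OF distinct i j] by simp
      then show ?thesis using False i j by (auto simp: nth_append)
    qed (use i j in \<open>auto simp: nth_append C_def\<close>)
  qed auto
  also have "det \<dots> = det (indexed_mat js G) * det (1\<^sub>m (length rs) :: 'a mat)"
    by (rule det_four_block_mat_upper_right_zero) (auto simp: C_def)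
  finally show ?thesis by simp
qed

text \<open>The test for zero entries prunes the expansion of sparse matrices.\<close>

lemma det_mat_Suc_expand_first_row:
  "det (mat (Suc n) (Suc n) f) = (\<Sum>j<Suc n. if f (0, j) = 0 then 0 else
      (-1) ^ j * f (0, j) * det (mat n n (\<lambda>(i, j'). f (Suc i, if j' < j then j' else Suc j'))))"
proof -
  have minor: "mat n n (\<lambda>(i, j'). mat (Suc n) (Suc n) f $$ (Suc i, if j' < j then j' else Suc j'))
     = mat n n (\<lambda>(i, j'). f (Suc i, if j' < j then j' else Suc j'))" if "j < Suc n" for j
    by (rule eq_matI) auto
  show ?thesis
    by (subst laplace_expansion_row[of _ "Suc n" 0]) (auto simp: cofactor_def mat_delete_def minor intro!: sum.cong)
qed

section \<open>Walks along branches\<close>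

text \<open>A walk along branches: arc \<open>(c, i)\<close> is the \<open>i\<close>-th arc of branch \<open>c\<close>, which has \<open>L c\<close> arcs.\<close>

definition branch_arcs :: "'c list \<Rightarrow> ('c \<Rightarrow> nat) \<Rightarrow> ('c \<times> nat) list" where
  "branch_arcs cs L = [(c, 0). c \<leftarrow> cs] @ [(c, i). c \<leftarrow> cs, i \<leftarrow> [1..<L c]]"

fun branch_walk :: "('c \<Rightarrow> nat) \<Rightarrow> ('c \<Rightarrow> 'c \<Rightarrow> 'a :: zero_neq_one) \<Rightarrow> 'c \<times> nat \<Rightarrow> 'c \<times> nat \<Rightarrow> 'a" where
  "branch_walk L B (c, i) (d, j) =
     (if Suc i < L c then (if d = c \<and> j = Suc i then 1 else 0) else if j = 0 then B c d else 0)"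

lemma set_branch_arcs:
  assumes "\<And>c. c \<in> set cs \<Longrightarrow> 0 < L c"
  shows "set (branch_arcs cs L) = {(c, i). c \<in> set cs \<and> i < L c}"
proof -
  have "(c, i) \<in> set (branch_arcs cs L) \<longleftrightarrow> c \<in> set cs \<and> i < L c" for c i
    using assms by (cases i) (auto simp: branch_arcs_def image_iff)
  then show ?thesis by auto
qed

lemma distinct_branch_arcs: "distinct cs \<Longrightarrow> distinct (branch_arcs cs L)"
  by (induction cs) (auto simp: branch_arcs_def distinct_map inj_on_def)

text \<open>Peeling off the deterministic moves: \<open>x I - W = R Q\<close>, where \<open>R\<close> only keeps the moves
  inside branches and \<open>Q\<close> sends every arc of \<open>c\<close> directly to the jump out of \<open>c\<close>, damped by
  \<open>x\<close> to the power of the remaining length of \<open>c\<close>.\<close>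

lemma branch_walk_factor:
  fixes B :: "'c \<Rightarrow> 'c \<Rightarrow> 'a :: field" and L :: "'c \<Rightarrow> nat" and x :: 'a
  defines "R \<equiv> \<lambda>(c, i) q. (if (c, i) = q then x else 0) - (if Suc i < L c \<and> q = (c, Suc i) then 1 else 0)"
    and "Q \<equiv> \<lambda>(c, i) q. (if (c, i) = q then 1 else 0) - branch_walk L B (c, L c - 1) q / x ^ (L c - i)"
  assumes "distinct cs" "\<And>c. c \<in> set cs \<Longrightarrow> 0 < L c" "x \<noteq> 0"
  shows "indexed_mat (branch_arcs cs L) (\<lambda>p q. (if p = q then x else 0) - branch_walk L B p q)
       = indexed_mat (branch_arcs cs L) R * indexed_mat (branch_arcs cs L) Q"
proof -
  let ?A = "set (branch_arcs cs L)"
  have A: "?A = {(c, i). c \<in> set cs \<and> i < L c}" by (rule set_branch_arcs[OF assms(4)])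
  have "(\<Sum>m\<in>?A. R p m * Q m q) = (if p = q then x else 0) - branch_walk L B p q"
    if p: "p \<in> ?A" and q: "q \<in> ?A" for p q
  proof -
    obtain c i where p_eq: "p = (c, i)" and c: "c \<in> set cs" and i: "i < L c" using p A by auto
    have next_in: "Suc i < L c \<Longrightarrow> (c, Suc i) \<in> ?A" using A c by simp
    have "(\<Sum>m\<in>?A. R p m * Q m q)
        = (\<Sum>m\<in>?A. if m = p then x * Q m q else 0) - (\<Sum>m\<in>?A. if Suc i < L c \<and> m = (c, Suc i) then Q m q else 0)"
      unfolding sum_subtractf[symmetric] by (rule sum.cong) (auto simp: R_def p_eq)
    also have "\<dots> = x * Q p q - (if Suc i < L c then Q (c, Suc i) q else 0)"
      using p next_in by (simp add: sum.delta')
    also have "\<dots> = (if p = q then x else 0) - branch_walk L B p q"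
    proof (cases "Suc i < L c")
      case True
      then have "L c - i = Suc (L c - Suc i)" by simp
      then have "x * (branch_walk L B (c, L c - 1) q / x ^ (L c - i)) = branch_walk L B (c, L c - 1) q / x ^ (L c - Suc i)"
        using assms(5) by simp
      then show ?thesis using True by (cases q) (auto simp: Q_def p_eq right_diff_distrib)
    next
      case False
      then have "i = L c - 1" "L c - i = 1" using i by simp_all
      then show ?thesis using False assms(5) by (simp add: Q_def p_eq right_diff_distrib)
    qed
    finally show ?thesis .
  qed
  then show ?thesis
    by (simp add: indexed_mat_mult[OF distinct_branch_arcs[OF assms(3)]] cong: indexed_mat_cong)
qed

lemma det_branch_walk:
  fixes B :: "'c \<Rightarrow> 'c \<Rightarrow> 'a :: field"
  assumes "distinct cs" "\<And>c. c \<in> set cs \<Longrightarrow> 0 < L c" "x \<noteq> 0"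
  shows "det (indexed_mat (branch_arcs cs L) (\<lambda>p q. (if p = q then x else 0) - branch_walk L B p q))
       = x ^ length (branch_arcs cs L) * det (indexed_mat cs (\<lambda>c d. (if c = d then 1 else 0) - B c d / x ^ L c))"
proof -
  define R where "R = (\<lambda>(c, i) q. (if (c, i) = q then x else 0) - (if Suc i < L c \<and> q = (c, Suc i) then 1 else (0 :: 'a)))"
  define Q where "Q = (\<lambda>(c, i) q. (if (c, i) = q then 1 else 0) - branch_walk L B (c, L c - 1) q / x ^ (L c - i))"
  let ?xs = "branch_arcs cs L"
  have distinct: "distinct ?xs" by (rule distinct_branch_arcs[OF assms(1)])
  have A: "set ?xs = {(c, i). c \<in> set cs \<and> i < L c}" by (rule set_branch_arcs[OF assms(2)])
  have "det (indexed_mat ?xs R) = x ^ length ?xs"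
  proof (rule det_indexed_mat_ranked[OF distinct, where r = "\<lambda>(c, i). L c - i"])
    show "\<And>s. R s s = x" by (auto simp: R_def)
    show "\<And>s t. s \<in> set ?xs \<Longrightarrow> t \<in> set ?xs \<Longrightarrow> s \<noteq> t \<Longrightarrow> R s t \<noteq> 0 \<Longrightarrow>
        (\<lambda>(c, i). L c - i) t < (\<lambda>(c, i). L c - i) s"
      by (auto simp: R_def split: if_splits)
  qed
  moreover have "det (indexed_mat ?xs Q) = det (indexed_mat cs (\<lambda>c d. (if c = d then 1 else 0) - B c d / x ^ L c))"
  proof -
    have "det (indexed_mat ?xs Q) = det (indexed_mat (map (\<lambda>c. (c, 0)) cs) Q)"
      unfolding branch_arcs_def
    proof (rule det_indexed_mat_append_unit_cols)
      show "distinct (map (\<lambda>c. (c, 0)) cs @ [(c, i). c \<leftarrow> cs, i \<leftarrow> [1..<L c]])"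
        using distinct by (simp add: branch_arcs_def)
      fix s t assume "t \<in> set [(c, i). c \<leftarrow> cs, i \<leftarrow> [1..<L c]]"
      then obtain d j where t: "t = (d, j)" "0 < j" by auto
      have "\<not> Suc (n - 1) < n" for n :: nat by simp
      then show "Q s t = (if s = t then 1 else 0)" using t by (cases s) (simp add: Q_def)
    qed
    also have "\<dots> = det (indexed_mat cs (\<lambda>c d. (if c = d then 1 else 0) - B c d / x ^ L c))"
      using assms(2) by (simp add: indexed_mat_map Q_def cong: indexed_mat_cong)
    finally show ?thesis .
  qed
  moreover have "indexed_mat ?xs (\<lambda>p q. (if p = q then x else 0) - branch_walk L B p q)
      = indexed_mat ?xs R * indexed_mat ?xs Q"
    unfolding R_def Q_def by (rule branch_walk_factor[OF assms])
  ultimately show ?thesis by (simp add: det_mult[OF indexed_mat_carrier indexed_mat_carrier])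
qed

lemma length_branch_arcs:
  "(\<And>c. c \<in> set cs \<Longrightarrow> 0 < L c) \<Longrightarrow> length (branch_arcs cs L) = (\<Sum>c\<leftarrow>cs. L c)"
proof (induction cs)
  case (Cons c cs)
  have "0 < L c" "length (branch_arcs cs L) = (\<Sum>c\<leftarrow>cs. L c)" using Cons by simp_all
  then show ?case unfolding branch_arcs_def by simp
qed (simp add: branch_arcs_def)

section \<open>Kemeny's constant from the characteristic polynomial\<close>

lemma poly_eqI_nonzero:
  fixes p q :: "'a :: {idom, ring_char_0} poly"
  assumes "\<And>x. x \<noteq> 0 \<Longrightarrow> poly p x = poly q x"
  shows "p = q"
proof (rule ccontr)
  assume "p \<noteq> q"
  then have "finite {x. poly (p - q) x = 0}" by (intro poly_roots_finite) simp
  moreover have "- {0} \<subseteq> {x. poly (p - q) x = 0}" using assms by auto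
  ultimately have "finite (- {0 :: 'a})" by (rule finite_subset[rotated])
  then show False by (simp add: Compl_eq_Diff_UNIV infinite_UNIV_char_0)
qed

lemma pderiv_linear: "pderiv [:c, 1:] = 1"
  by (simp add: pderiv_pCons)

lemma poly_pderiv_prod_linear:
  fixes M :: "complex multiset"
  assumes "z \<notin># M"
  shows "poly (pderiv (\<Prod>r\<in>#M. [:-r, 1:])) z = poly (\<Prod>r\<in>#M. [:-r, 1:]) z * (\<Sum>r\<in>#M. 1 / (z - r))"
  using assms
proof (induction M)
  case (add r M)
  let ?F = "\<Prod>r\<in>#M. [:-r, 1:]" and ?S = "\<Sum>r\<in>#M. 1 / (z - r)"
  have "z - r \<noteq> 0" and IH: "poly (pderiv ?F) z = poly ?F z * ?S" using add by auto
  have "F + (z - r) * (F * S) = (z - r) * F * (1 / (z - r) + S)" for F S :: complex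
    using \<open>z - r \<noteq> 0\<close> by (simp add: field_simps)
  moreover have "poly (pderiv (\<Prod>r\<in>#add_mset r M. [:-r, 1:])) z = poly ?F z + (z - r) * poly (pderiv ?F) z"
    by (simp only: image_mset_add_mset prod_mset.add_mset pderiv_mult pderiv_linear poly_add poly_mult) simp
  moreover have "poly (\<Prod>r\<in>#add_mset r M. [:-r, 1:]) z = (z - r) * poly ?F z"
    by (simp add: algebra_simps)
  moreover have "(\<Sum>r\<in>#add_mset r M. 1 / (z - r)) = 1 / (z - r) + ?S" by simp
  ultimately show ?case by (simp only: IH)
qed simp

lemma sum_proots_inverse_diff:
  fixes p :: "complex poly"
  assumes "poly p z \<noteq> 0"
  shows "(\<Sum>r\<in>#proots p. 1 / (z - r)) = poly (pderiv p) z / poly p z"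
proof -
  let ?F = "\<Prod>r\<in>#proots p. [:-r, 1:]"
  have p0: "p \<noteq> 0" using assms by auto
  have p_eq: "p = Polynomial.smult (lead_coeff p) ?F"
    using complex_poly_decompose_multiset[of p] by simp
  have F0: "poly ?F z \<noteq> 0" using assms p_eq by (metis mult_zero_right poly_smult)
  have "z \<notin># proots p" using assms p0 by simp
  have "poly (pderiv p) z / poly p z = poly (pderiv ?F) z / poly ?F z"
    using p0 by (subst (1 2) p_eq) (simp add: pderiv_smult)
  also have "\<dots> = poly ?F z * (\<Sum>r\<in>#proots p. 1 / (z - r)) / poly ?F z"
    by (simp only: poly_pderiv_prod_linear[OF \<open>z \<notin># proots p\<close>])
  also have "\<dots> = (\<Sum>r\<in>#proots p. 1 / (z - r))"
    using F0 by (rule nonzero_mult_div_cancel_left)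
  finally show ?thesis by simp
qed

lemma sum_proots_remove_simple_root:
  fixes p :: "complex poly"
  assumes root: "poly p 1 = 0" and simple: "poly (pderiv p) 1 \<noteq> 0"
  shows "(\<Sum>r\<in>#proots p - {#1#}. 1 / (1 - r)) = poly (pderiv (pderiv p)) 1 / (2 * poly (pderiv p) 1)"
proof -
  obtain q where p_eq: "p = [:-1, 1:] * q" using root by (auto simp: poly_eq_0_iff_dvd elim: dvdE)
  have d1: "poly (pderiv p) 1 = poly q 1" and d2: "poly (pderiv (pderiv p)) 1 = 2 * poly (pderiv q) 1"
    unfolding p_eq by (simp_all only: pderiv_mult pderiv_add pderiv_linear pderiv_1 poly_add poly_mult) simp_all
  have q0: "q \<noteq> 0" using simple d1 by auto
  have "proots p = add_mset 1 (proots q)" unfolding p_eq by (subst proots_mult) (use q0 in auto)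
  then show ?thesis using sum_proots_inverse_diff[of q 1] simple by (simp add: d1 d2)
qed

lemma kemeny_eq_char_poly_derivs:
  assumes "poly (char_poly P) 1 = 0" "poly (pderiv (char_poly P)) 1 \<noteq> 0"
  shows "kemeny P = poly (pderiv (pderiv (char_poly P))) 1 / (2 * poly (pderiv (char_poly P)) 1)"
  unfolding kemeny_def using sum_proots_remove_simple_root[OF assms] by simp

definition cycle_factor :: "nat \<Rightarrow> complex poly" where
  "cycle_factor a = monom 1 a - [:1/2:]"

definition junction_factor :: "nat \<Rightarrow> nat \<Rightarrow> nat \<Rightarrow> complex poly" where
  "junction_factor l a b = monom 1 (2 * l) * cycle_factor a * cycle_factor b - [:1/4:]"

text \<open>The number of edges of the barbell is the first argument \<open>m\<close>.\<close>

definition barbell_kemeny :: "nat \<Rightarrow> nat \<Rightarrow> nat \<Rightarrow> real" where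
  "barbell_kemeny m a b = 2 * (real a + real b) + real m - 1/2 - (real a ^ 2 + real b ^ 2) / (2 * real m)"

lemma poly_monom_derivs_at_1:
  "poly (monom (1 :: complex) m) 1 = 1"
  "poly (pderiv (monom (1 :: complex) m)) 1 = of_nat m"
  "poly (pderiv (pderiv (monom (1 :: complex) m))) 1 = of_nat m * (of_nat m - 1)"
  by (cases m; simp add: pderiv_monom poly_monom algebra_simps)+

lemma cycle_factor_at_1:
  "poly (cycle_factor a) 1 = 1/2"
  "poly (pderiv (cycle_factor a)) 1 = of_nat a"
  "poly (pderiv (pderiv (cycle_factor a))) 1 = of_nat a * (of_nat a - 1)"
  by (simp_all add: cycle_factor_def pderiv_diff poly_monom_derivs_at_1)

lemma junction_factor_at_1:
  "poly (junction_factor l a b) 1 = 0"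
  "poly (pderiv (junction_factor l a b)) 1 = of_nat (l + a + b) / 2"
  "poly (pderiv (pderiv (junction_factor l a b))) 1
     = of_nat (l + a + b) ^ 2 - of_nat (l + a + b) / 2 - (of_nat a ^ 2 + of_nat b ^ 2) / 2"
  by (simp_all add: junction_factor_def pderiv_diff pderiv_mult pderiv_add poly_monom_derivs_at_1 cycle_factor_at_1
      field_simps power2_eq_square)

lemma kemeny_of_barbell_char_poly:
  assumes char_poly: "char_poly P = cycle_factor a * cycle_factor b * junction_factor l a b"
    and pos: "0 < l + a + b"
  shows "kemeny P = complex_of_real (barbell_kemeny (l + a + b) a b)"
proof -
  let ?N = "of_nat (l + a + b) :: complex"
  have N0: "?N \<noteq> 0" using pos by (simp only: of_nat_eq_0_iff)
  have d1: "poly (pderiv (char_poly P)) 1 = ?N / 8"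
    unfolding char_poly by (simp add: pderiv_mult cycle_factor_at_1 junction_factor_at_1)
  have d2: "poly (pderiv (pderiv (char_poly P))) 1
      = (of_nat a + of_nat b) * ?N / 2 + (?N ^ 2 - ?N / 2 - (of_nat a ^ 2 + of_nat b ^ 2) / 2) / 4"
    unfolding char_poly by (simp add: pderiv_mult pderiv_add cycle_factor_at_1 junction_factor_at_1 field_simps)
  have "kemeny P = poly (pderiv (pderiv (char_poly P))) 1 / (2 * poly (pderiv (char_poly P)) 1)"
    by (rule kemeny_eq_char_poly_derivs) (simp add: char_poly junction_factor_at_1, use pos in \<open>simp add: d1 del: of_nat_add\<close>)
  also have "\<dots> = 2 * (of_nat a + of_nat b) + ?N - 1/2 - (of_nat a ^ 2 + of_nat b ^ 2) / (2 * ?N)"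
    unfolding d1 d2 using N0 by (simp add: field_simps power2_eq_square del: of_nat_add)
  also have "\<dots> = complex_of_real (barbell_kemeny (l + a + b) a b)"
    by (simp add: barbell_kemeny_def)
  finally show ?thesis .
qed

section \<open>The non-backtracking walk on a cycle barbell\<close>

lemma det_junction_pattern:
  fixes \<alpha> \<beta> \<pi> :: "'a :: comm_ring_1"
  shows "det (mat 6 6 (\<lambda>(i, j).
      [[1 - \<alpha>, 0, - \<alpha>, 0, 0, 0],
       [0, 1 - \<alpha>, - \<alpha>, 0, 0, 0],
       [0, 0, 1, - \<pi>, - \<pi>, 0],
       [0, 0, 0, 1 - \<beta>, 0, - \<beta>],
       [0, 0, 0, 0, 1 - \<beta>, - \<beta>],
       [- \<pi>, - \<pi>, 0, 0, 0, 1]] ! i ! j))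
    = (1 - \<alpha>)\<^sup>2 * (1 - \<beta>)\<^sup>2 - 4 * \<pi>\<^sup>2 * \<alpha> * \<beta> * (1 - \<alpha>) * (1 - \<beta>)"
proof -
  have six: "(6 :: nat) = Suc (Suc (Suc (Suc (Suc (Suc 0)))))" by simp
  have drop_zero_test: "(if c = 0 then 0 else d * c * X) = d * c * X" for c d X :: 'a by simp
  show ?thesis unfolding six
    by (simp add: det_mat_Suc_expand_first_row sum.lessThan_Suc drop_zero_test)
      (simp add: algebra_simps power2_eq_square)
qed

definition nb_transition :: "nat set set \<Rightarrow> nat \<times> nat \<Rightarrow> nat \<times> nat \<Rightarrow> complex" where
  "nb_transition E = (\<lambda>(u, v) (x, y). if x = v \<and> y \<noteq> u then 1 / of_nat (gdeg E v - 1) else 0)"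

lemma nb_matrix_eq_indexed_mat: "nb_matrix E = indexed_mat (sorted_list_of_set (arcs E)) (nb_transition E)"
  unfolding nb_matrix_def indexed_mat_def nb_transition_def Let_def by (simp add: case_prod_beta)

locale cycle_barbell =
  fixes k a b :: nat
  assumes a3: "a \<ge> 3" and b3: "b \<ge> 3" and k2: "k \<ge> 2"
begin

abbreviation E where "E \<equiv> cb_edges k a b"

definition hub :: nat where "hub = a + k - 2"

text \<open>The arcs of the barbell split into six branches, each running between the two vertices of
  degree 3, \<open>0\<close> and \<open>hub\<close>: branches 0 and 1 go around \<open>C\<^sub>a\<close> from \<open>0\<close> in the two directions,
  branch 2 runs along the path from \<open>0\<close> to \<open>hub\<close>, branches 3 and 4 go around \<open>C\<^sub>b\<close> from \<open>hub\<close>, and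
  branch 5 runs back along the path. Branch \<open>c\<close> visits the vertices
  \<open>branch_vertex c 0, \<dots>, branch_vertex c (branch_len c)\<close>.\<close>

definition branch_len :: "nat \<Rightarrow> nat" where
  "branch_len c = (if c = 0 \<or> c = 1 then a else if c = 3 \<or> c = 4 then b else k - 1)"

definition branch_vertex :: "nat \<Rightarrow> nat \<Rightarrow> nat" where
  "branch_vertex c i = (if c = 0 then (if i < a then i else 0)
       else if c = 1 then (if i = 0 then 0 else a - i)
       else if c = 2 then cb_path_vertex a i
       else if c = 3 then (if i < b then hub + i else hub)
       else if c = 4 then (if i = 0 then hub else hub + b - i)
       else cb_path_vertex a (k - 1 - i))"

definition branch_arc :: "nat \<Rightarrow> nat \<Rightarrow> nat \<times> nat" where
  "branch_arc c i = (branch_vertex c i, branch_vertex c (Suc i))"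

definition reverse_branch :: "nat \<Rightarrow> nat" where
  "reverse_branch c = (if c = 0 then 1 else if c = 1 then 0 else if c = 2 then 5 else if c = 5 then 2 else if c = 3 then 4 else 3)"

text \<open>Branch \<open>d\<close> leaves the end vertex of branch \<open>c\<close> without backtracking.\<close>

definition branch_follows :: "nat \<Rightarrow> nat \<Rightarrow> bool" where
  "branch_follows c d \<longleftrightarrow>
     (c, d) \<in> {(0,0), (0,2), (1,1), (1,2), (2,3), (2,4), (3,3), (3,5), (4,4), (4,5), (5,0), (5,1)}"

lemma branch_cases: "c < 6 \<Longrightarrow> c = 0 \<or> c = 1 \<or> c = 2 \<or> c = 3 \<or> c = 4 \<or> c = (5::nat)"
  by auto

lemma branch_vertex_simps:
  "branch_vertex 0 i = (if i < a then i else 0)"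
  "branch_vertex (Suc 0) i = (if i = 0 then 0 else a - i)"
  "branch_vertex 2 i = cb_path_vertex a i"
  "branch_vertex 3 i = (if i < b then hub + i else hub)"
  "branch_vertex 4 i = (if i = 0 then hub else hub + b - i)"
  "branch_vertex 5 i = cb_path_vertex a (k - 1 - i)"
  by (simp_all add: branch_vertex_def)

lemma branch_len_simps:
  "branch_len 0 = a" "branch_len (Suc 0) = a" "branch_len 2 = k - 1"
  "branch_len 3 = b" "branch_len 4 = b" "branch_len 5 = k - 1"
  by (simp_all add: branch_len_def)

lemma branch_len_pos: "c < 6 \<Longrightarrow> 0 < branch_len c"
  using a3 b3 k2 by (auto simp: branch_len_def)

lemma sum_branch_len: "(\<Sum>c\<leftarrow>[0..<6]. branch_len c) = 2 * (a + b + (k - 1))"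
  by (simp add: upt_rec branch_len_def)

lemma branch_arc_inj:
  assumes c: "c < 6" and d: "d < 6" and i: "i < branch_len c" and j: "j < branch_len d"
    and eq: "branch_arc c i = branch_arc d j"
  shows "c = d \<and> i = j"
  using branch_cases[OF c] branch_cases[OF d] i j eq a3 b3 k2
  by (elim disjE) (auto simp: branch_arc_def branch_vertex_simps branch_len_simps hub_def cb_path_vertex_def split: if_splits)

lemma mem_cb_edges_iff:
  "{u, v} \<in> E \<longleftrightarrow>
     (\<exists>i<a. {u, v} = {i, (i + 1) mod a})
   \<or> (\<exists>j. j + 1 < k \<and> {u, v} = {cb_path_vertex a j, cb_path_vertex a (j + 1)})
   \<or> (\<exists>i<b. {u, v} = {hub + i, hub + (i + 1) mod b})"
  unfolding cb_edges_def hub_def by blast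

lemma branch_arc_in_edges:
  assumes c: "c < 6" and i: "i < branch_len c"
  shows "{branch_vertex c i, branch_vertex c (Suc i)} \<in> E"
  using branch_cases[OF c]
proof (elim disjE)
  assume "c = 0"
  then show ?thesis unfolding mem_cb_edges_iff using i
    by (intro disjI1 exI[of _ i]) (auto simp: branch_vertex_simps branch_len_simps mod_Suc)
next
  assume "c = 1"
  then show ?thesis unfolding mem_cb_edges_iff using i a3
    by (intro disjI1 exI[of _ "a - 1 - i"]) (auto simp: branch_vertex_simps branch_len_simps mod_Suc)
next
  assume "c = 2"
  then show ?thesis unfolding mem_cb_edges_iff using i
    by (intro disjI2 disjI1 exI[of _ i]) (auto simp: branch_vertex_simps branch_len_simps)
next
  assume "c = 3"
  then show ?thesis unfolding mem_cb_edges_iff using i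
    by (intro disjI2 exI[of _ i]) (auto simp: branch_vertex_simps branch_len_simps mod_Suc)
next
  assume "c = 4"
  then show ?thesis unfolding mem_cb_edges_iff using i b3
    by (intro disjI2 exI[of _ "b - 1 - i"]) (auto simp: branch_vertex_simps branch_len_simps mod_Suc)
next
  assume "c = 5"
  then have "k - 2 - i + 1 < k \<and> {branch_vertex c i, branch_vertex c (Suc i)}
      = {cb_path_vertex a (k - 2 - i), cb_path_vertex a (k - 2 - i + 1)}"
    using i by (auto simp: branch_vertex_simps branch_len_simps Suc_diff_Suc numeral_2_eq_2)
  then show ?thesis unfolding mem_cb_edges_iff by blast
qed

lemma edge_is_branch_arc:
  assumes "{u, v} \<in> E"
  shows "\<exists>c i. c < 6 \<and> i < branch_len c \<and> branch_arc c i = (u, v)"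
proof -
  let ?is_arc = "\<lambda>p. \<exists>c i. c < 6 \<and> i < branch_len c \<and> branch_arc c i = p"
  have "?is_arc (i, (i + 1) mod a)" if "i < a" for i
    using that by (intro exI[of _ 0] exI[of _ i]) (auto simp: branch_arc_def branch_vertex_simps branch_len_simps mod_Suc)
  moreover have "?is_arc ((i + 1) mod a, i)" if "i < a" for i
    using that a3 by (intro exI[of _ 1] exI[of _ "a - 1 - i"])
      (auto simp: branch_arc_def branch_vertex_def branch_len_def mod_Suc)
  moreover have "?is_arc (cb_path_vertex a j, cb_path_vertex a (j + 1))" if "j + 1 < k" for j
    using that by (intro exI[of _ 2] exI[of _ j]) (auto simp: branch_arc_def branch_vertex_simps branch_len_simps)
  moreover have "?is_arc (cb_path_vertex a (j + 1), cb_path_vertex a j)" if "j + 1 < k" for j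
    using that by (intro exI[of _ 5] exI[of _ "k - 2 - j"])
      (auto simp: branch_arc_def branch_vertex_simps branch_len_simps Suc_diff_Suc numeral_2_eq_2)
  moreover have "?is_arc (hub + i, hub + (i + 1) mod b)" if "i < b" for i
    using that by (intro exI[of _ 3] exI[of _ i]) (auto simp: branch_arc_def branch_vertex_simps branch_len_simps mod_Suc)
  moreover have "?is_arc (hub + (i + 1) mod b, hub + i)" if "i < b" for i
    using that b3 by (intro exI[of _ 4] exI[of _ "b - 1 - i"])
      (auto simp: branch_arc_def branch_vertex_simps branch_len_simps mod_Suc)
  ultimately show ?thesis using assms unfolding mem_cb_edges_iff doubleton_eq_iff by blast
qed

lemma arcs_cb_edges: "arcs E = case_prod branch_arc ` {(c, i). c < 6 \<and> i < branch_len c}"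
proof (intro equalityI subsetI)
  fix p assume "p \<in> arcs E"
  then obtain u v where "p = (u, v)" "{u, v} \<in> E" unfolding arcs_def by auto
  then show "p \<in> case_prod branch_arc ` {(c, i). c < 6 \<and> i < branch_len c}"
    using edge_is_branch_arc by force
next
  fix p assume "p \<in> case_prod branch_arc ` {(c, i). c < 6 \<and> i < branch_len c}"
  then show "p \<in> arcs E" using branch_arc_in_edges by (auto simp: arcs_def branch_arc_def)
qed

lemma reverse_branch_less: "c < 6 \<Longrightarrow> reverse_branch c < 6"
  by (simp add: reverse_branch_def)

lemma branch_len_reverse: "c < 6 \<Longrightarrow> branch_len (reverse_branch c) = branch_len c"
  using branch_cases[of c] by (auto simp: branch_len_def reverse_branch_def)

lemma branch_vertex_reverse:
  assumes c: "c < 6" and j: "j \<le> branch_len c"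
  shows "branch_vertex (reverse_branch c) j = branch_vertex c (branch_len c - j)"
  using branch_cases[OF c] j a3 b3 k2
  by (elim disjE) (auto simp: branch_vertex_simps branch_len_simps reverse_branch_def cb_path_vertex_def)

lemma branch_vertex_interior_cases:
  assumes c: "c < 6" and d: "d < 6" and m: "0 < m" "m < branch_len c" and j: "j \<le> branch_len d"
    and eq: "branch_vertex d j = branch_vertex c m"
  shows "(d = c \<and> j = m) \<or> (d = reverse_branch c \<and> j = branch_len c - m)"
  using branch_cases[OF c] branch_cases[OF d] m j eq a3 b3 k2
  by (elim disjE) (auto simp: branch_vertex_simps branch_len_simps reverse_branch_def hub_def cb_path_vertex_def split: if_splits)

lemma branch_vertex_eq_0:
  assumes d: "d < 6" and j: "j < branch_len d" and eq: "branch_vertex d j = 0"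
  shows "j = 0 \<and> d \<le> 2"
  using branch_cases[OF d] j eq a3 b3 k2
  by (elim disjE) (auto simp: branch_vertex_simps branch_len_simps hub_def cb_path_vertex_def split: if_splits)

lemma branch_vertex_eq_hub:
  assumes d: "d < 6" and j: "j < branch_len d" and eq: "branch_vertex d j = hub"
  shows "j = 0 \<and> 3 \<le> d"
  using branch_cases[OF d] j eq a3 b3 k2
  by (elim disjE) (auto simp: branch_vertex_simps branch_len_simps hub_def cb_path_vertex_def split: if_splits)

lemma branch_vertex_Suc_ne_pred:
  assumes c: "c < 6" and m: "0 < m" "m < branch_len c"
  shows "branch_vertex c (Suc m) \<noteq> branch_vertex c (m - 1)"
  using branch_cases[OF c] m a3 b3 k2
  by (elim disjE) (auto simp: branch_vertex_simps branch_len_simps hub_def cb_path_vertex_def split: if_splits)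

lemma branch_vertex_start:
  "branch_vertex 0 0 = 0" "branch_vertex (Suc 0) 0 = 0" "branch_vertex 2 0 = 0"
  "branch_vertex 3 0 = hub" "branch_vertex 4 0 = hub" "branch_vertex 5 0 = hub"
  using k2 by (simp_all add: branch_vertex_simps cb_path_vertex_def hub_def)

lemma branch_vertex_1:
  "branch_vertex 0 1 = 1" "branch_vertex (Suc 0) 1 = a - 1" "branch_vertex 2 1 = a"
  "branch_vertex 3 1 = hub + 1" "branch_vertex 4 1 = hub + b - 1" "branch_vertex 5 1 = cb_path_vertex a (k - 2)"
proof -
  have "k - 1 - 1 = k - 2" by simp
  then show "branch_vertex 5 1 = cb_path_vertex a (k - 2)" by (simp add: branch_vertex_simps)
qed (use a3 b3 k2 in \<open>simp_all add: branch_vertex_simps cb_path_vertex_def hub_def\<close>)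

lemma branch_vertex_last:
  "branch_vertex 0 (branch_len 0) = 0" "branch_vertex 1 (branch_len 1) = 0" "branch_vertex 2 (branch_len 2) = hub"
  "branch_vertex 3 (branch_len 3) = hub" "branch_vertex 4 (branch_len 4) = hub" "branch_vertex 5 (branch_len 5) = 0"
  using a3 b3 k2 by (simp_all add: branch_vertex_simps branch_len_simps cb_path_vertex_def hub_def)

lemma branch_vertex_end: "c < 6 \<Longrightarrow> branch_vertex c (branch_len c) \<in> {0, hub}"
  using branch_cases[of c] branch_vertex_last by auto

definition neighbours :: "nat \<Rightarrow> nat set" where
  "neighbours v = {y. (v, y) \<in> arcs E}"

lemma gdeg_eq_card_neighbours: "gdeg E v = card (neighbours v)"
  unfolding gdeg_def neighbours_def arcs_def by simp

lemma neighbours_eq: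
  "neighbours v = {y. \<exists>d j. d < 6 \<and> j < branch_len d \<and> branch_vertex d j = v \<and> branch_vertex d (Suc j) = y}"
  unfolding neighbours_def arcs_cb_edges branch_arc_def by auto

lemma neighbours_branch_start: "c < 6 \<Longrightarrow> branch_vertex c 1 \<in> neighbours (branch_vertex c 0)"
  unfolding neighbours_eq using branch_len_pos by fastforce

lemma neighbours_interior:
  assumes c: "c < 6" and m: "0 < m" "m < branch_len c"
  shows "neighbours (branch_vertex c m) = {branch_vertex c (Suc m), branch_vertex c (m - 1)}"
proof (intro equalityI subsetI)
  fix y assume "y \<in> neighbours (branch_vertex c m)"
  then obtain d j where d: "d < 6" and j: "j < branch_len d"
    and eq: "branch_vertex d j = branch_vertex c m" and y: "branch_vertex d (Suc j) = y"
    unfolding neighbours_eq by blast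
  from branch_vertex_interior_cases[OF c d m _ eq] j consider "d = c" "j = m"
    | "d = reverse_branch c" "j = branch_len c - m" by fastforce
  then show "y \<in> {branch_vertex c (Suc m), branch_vertex c (m - 1)}"
  proof cases
    case 2
    then have "branch_vertex d (Suc j) = branch_vertex c (m - 1)"
      using branch_vertex_reverse[OF c, of "Suc j"] j branch_len_reverse[OF c] m by simp
    then show ?thesis using y by simp
  qed (use y in simp)
next
  have rev: "branch_vertex (reverse_branch c) (branch_len c - m) = branch_vertex c m"
    "branch_vertex (reverse_branch c) (Suc (branch_len c - m)) = branch_vertex c (m - 1)"
    "branch_len c - m < branch_len (reverse_branch c)"
    using branch_vertex_reverse[OF c] branch_len_reverse[OF c] m by (simp_all add: Suc_diff_le)
  fix y assume "y \<in> {branch_vertex c (Suc m), branch_vertex c (m - 1)}"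
  then show "y \<in> neighbours (branch_vertex c m)"
    unfolding neighbours_eq using c m rev reverse_branch_less[OF c] by auto
qed

lemma neighbours_0: "neighbours 0 = {1, a - 1, a}"
proof (intro equalityI subsetI)
  fix y assume "y \<in> neighbours 0"
  then obtain d j where d: "d < 6" "j < branch_len d" "branch_vertex d j = 0" and y: "branch_vertex d (Suc j) = y"
    unfolding neighbours_eq by blast
  with branch_vertex_eq_0[OF d] have "j = 0" "d = 0 \<or> d = 1 \<or> d = 2" "branch_vertex d 1 = y" by auto
  then show "y \<in> {1, a - 1, a}" using branch_vertex_1 by auto
next
  show "y \<in> neighbours 0" if "y \<in> {1, a - 1, a}" for y
    using that neighbours_branch_start[of 0] neighbours_branch_start[of 1] neighbours_branch_start[of 2]
      branch_vertex_start branch_vertex_1 by auto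
qed

lemma neighbours_hub: "neighbours hub = {hub + 1, hub + b - 1, cb_path_vertex a (k - 2)}"
proof (intro equalityI subsetI)
  fix y assume "y \<in> neighbours hub"
  then obtain d j where d: "d < 6" "j < branch_len d" "branch_vertex d j = hub" and y: "branch_vertex d (Suc j) = y"
    unfolding neighbours_eq by blast
  with branch_vertex_eq_hub[OF d] have "j = 0" "d = 3 \<or> d = 4 \<or> d = 5" "branch_vertex d 1 = y" by auto
  then show "y \<in> {hub + 1, hub + b - 1, cb_path_vertex a (k - 2)}" using branch_vertex_1 by auto
next
  show "y \<in> neighbours hub" if "y \<in> {hub + 1, hub + b - 1, cb_path_vertex a (k - 2)}" for y
    using that neighbours_branch_start[of 3] neighbours_branch_start[of 4] neighbours_branch_start[of 5]
      branch_vertex_start branch_vertex_1 by auto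
qed

lemma gdeg_interior:
  assumes "c < 6" "0 < m" "m < branch_len c"
  shows "gdeg E (branch_vertex c m) = 2"
  unfolding gdeg_eq_card_neighbours neighbours_interior[OF assms]
  using branch_vertex_Suc_ne_pred[OF assms] by simp

lemma gdeg_branch_end:
  assumes "c < 6"
  shows "gdeg E (branch_vertex c (branch_len c)) = 3"
proof -
  have "gdeg E 0 = 3" unfolding gdeg_eq_card_neighbours neighbours_0 using a3 by auto
  moreover have "gdeg E hub = 3"
  proof -
    have "cb_path_vertex a (k - 2) < hub" using a3 k2 by (auto simp: cb_path_vertex_def hub_def)
    then show ?thesis unfolding gdeg_eq_card_neighbours neighbours_hub using b3 by auto
  qed
  ultimately show ?thesis using branch_vertex_end[OF assms] by auto
qed

definition junction :: "nat \<Rightarrow> nat \<Rightarrow> complex" where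
  "junction c d = (if branch_follows c d then 1/2 else 0)"

lemma nb_transition_branch_arc:
  "nb_transition E (branch_arc c i) (branch_arc d j) =
     (if branch_vertex d j = branch_vertex c (Suc i) \<and> branch_vertex d (Suc j) \<noteq> branch_vertex c i
      then 1 / of_nat (gdeg E (branch_vertex c (Suc i)) - 1) else 0)"
  by (simp add: nb_transition_def branch_arc_def)

lemma continues_inside_branch:
  assumes c: "c < 6" and i: "Suc i < branch_len c" and d: "d < 6" and j: "j < branch_len d"
  shows "branch_vertex d j = branch_vertex c (Suc i) \<and> branch_vertex d (Suc j) \<noteq> branch_vertex c i
    \<longleftrightarrow> d = c \<and> j = Suc i"
proof
  assume h: "branch_vertex d j = branch_vertex c (Suc i) \<and> branch_vertex d (Suc j) \<noteq> branch_vertex c i"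
  have "(d = c \<and> j = Suc i) \<or> (d = reverse_branch c \<and> j = branch_len c - Suc i)"
    using branch_vertex_interior_cases[OF c d _ i, of j] h j by simp
  then consider "d = c \<and> j = Suc i" | "d = reverse_branch c" "j = branch_len c - Suc i" by blast
  then show "d = c \<and> j = Suc i"
  proof cases
    case 2
    then have "branch_vertex d (Suc j) = branch_vertex c i"
      using branch_vertex_reverse[OF c, of "Suc j"] j branch_len_reverse[OF c] i by simp
    then show ?thesis using h by simp
  qed
next
  assume "d = c \<and> j = Suc i"
  then show "branch_vertex d j = branch_vertex c (Suc i) \<and> branch_vertex d (Suc j) \<noteq> branch_vertex c i"
    using branch_vertex_Suc_ne_pred[OF c _ i] by simp
qed

lemma continues_after_branch:
  assumes c: "c < 6" and d: "d < 6" and j: "j < branch_len d"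
  shows "branch_vertex d j = branch_vertex c (branch_len c) \<and> branch_vertex d (Suc j) \<noteq> branch_vertex c (branch_len c - 1)
    \<longleftrightarrow> j = 0 \<and> branch_follows c d"
proof (cases "j = 0")
  case True
  have "cb_path_vertex a (k - 2) < hub" "k - 1 - 1 = k - 2" using a3 k2 by (auto simp: cb_path_vertex_def hub_def)
  then show ?thesis using branch_cases[OF c] branch_cases[OF d] True a3 b3 k2
    apply (elim disjE)
    apply (simp_all add: branch_len_simps branch_follows_def branch_vertex_simps cb_path_vertex_def hub_def)
    apply arith+
    done
next
  case False
  then have "branch_vertex d j \<noteq> branch_vertex c (branch_len c)"
    using branch_vertex_end[OF c] branch_vertex_eq_0[OF d j] branch_vertex_eq_hub[OF d j] by auto
  then show ?thesis using False by simp
qed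

lemma nb_transition_eq_branch_walk:
  assumes c: "c < 6" and i: "i < branch_len c" and d: "d < 6" and j: "j < branch_len d"
  shows "nb_transition E (branch_arc c i) (branch_arc d j) = branch_walk branch_len junction (c, i) (d, j)"
proof (cases "Suc i < branch_len c")
  case True
  then show ?thesis
    unfolding nb_transition_branch_arc continues_inside_branch[OF c True d j]
    using gdeg_interior[OF c _ True] by auto
next
  case False
  then have i_eq: "i = branch_len c - 1" using i by simp
  have "Suc (branch_len c - 1) = branch_len c" using branch_len_pos[OF c] by simp
  then show ?thesis
    using continues_after_branch[OF c d j] gdeg_branch_end[OF c]
    unfolding nb_transition_branch_arc i_eq by (simp add: junction_def)
qed

lemma junction_mat_eq:
  "indexed_mat [0..<6] (\<lambda>c d. (if c = d then 1 else 0) - junction c d * t c) = mat 6 6 (\<lambda>(i, j).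
      [[1 - t 0 / 2, 0, - (t 0 / 2), 0, 0, 0],
       [0, 1 - t 1 / 2, - (t 1 / 2), 0, 0, 0],
       [0, 0, 1, - (t 2 / 2), - (t 2 / 2), 0],
       [0, 0, 0, 1 - t 3 / 2, 0, - (t 3 / 2)],
       [0, 0, 0, 0, 1 - t 4 / 2, - (t 4 / 2)],
       [- (t 5 / 2), - (t 5 / 2), 0, 0, 0, 1]] ! i ! j)"
  unfolding indexed_mat_upt
  apply (intro cong_mat refl)
  subgoal for i j
    by (drule branch_cases)+ (elim disjE; simp add: junction_def branch_follows_def)
  done

lemma poly_char_poly_nb_matrix:
  assumes "x \<noteq> 0"
  shows "poly (char_poly (nb_matrix E)) x = x ^ (2 * (a + b + (k - 1)))
    * det (indexed_mat [0..<6] (\<lambda>c d. (if c = d then 1 else 0) - junction c d / x ^ branch_len c))"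
proof -
  define xs where "xs = branch_arcs [0..<6] branch_len"
  have pos: "0 < branch_len c" if "c \<in> set [0..<6]" for c using branch_len_pos that by simp
  have set_xs: "set xs = {(c, i). c < 6 \<and> i < branch_len c}"
    using set_branch_arcs[of "[0..<6]" branch_len, OF pos] by (auto simp: xs_def)
  have inj: "inj_on (case_prod branch_arc) (set xs)"
    unfolding set_xs by (rule inj_onI) (use branch_arc_inj in auto)
  have arcs: "set (map (case_prod branch_arc) xs) = arcs E"
    by (simp add: set_xs arcs_cb_edges)
  have distinct: "distinct (map (case_prod branch_arc) xs)"
    using distinct_branch_arcs[of "[0..<6]" branch_len] inj by (simp add: distinct_map xs_def)
  let ?xI = "\<lambda>s t. if s = t then x else 0"
  have "poly (char_poly (nb_matrix E)) x
      = det (indexed_mat (sorted_list_of_set (arcs E)) (\<lambda>s t. ?xI s t - nb_transition E s t))"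
    unfolding nb_matrix_eq_indexed_mat by (rule poly_char_poly_indexed_mat) simp
  also have "\<dots> = det (indexed_mat (map (case_prod branch_arc) xs) (\<lambda>s t. ?xI s t - nb_transition E s t))"
    by (rule det_indexed_mat_reorder) (use distinct arcs in \<open>simp_all flip: arcs\<close>)
  also have "\<dots> = det (indexed_mat xs (\<lambda>p q. ?xI p q - branch_walk branch_len junction p q))"
    unfolding indexed_mat_map
    by (intro arg_cong[where f = det] indexed_mat_cong)
      (auto simp: set_xs nb_transition_eq_branch_walk inj_on_eq_iff[OF inj])
  also have "\<dots> = x ^ length xs
      * det (indexed_mat [0..<6] (\<lambda>c d. (if c = d then 1 else 0) - junction c d / x ^ branch_len c))"
    unfolding xs_def by (rule det_branch_walk) (use pos assms in auto)
  also have "length xs = 2 * (a + b + (k - 1))"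
    using length_branch_arcs[of "[0..<6]" branch_len, OF pos] sum_branch_len by (simp add: xs_def)
  finally show ?thesis .
qed

lemma char_poly_nb_matrix: "char_poly (nb_matrix E) = cycle_factor a * cycle_factor b * junction_factor (k - 1) a b"
proof (rule poly_eqI_nonzero)
  fix x :: complex assume "x \<noteq> 0"
  define X Y Z where "X = x ^ a" and "Y = x ^ b" and "Z = x ^ (k - 1)"
  have "X \<noteq> 0" "Y \<noteq> 0" "Z \<noteq> 0" using \<open>x \<noteq> 0\<close> by (simp_all add: X_def Y_def Z_def)
  have "x ^ (2 * (a + b + (k - 1))) = X\<^sup>2 * Y\<^sup>2 * Z\<^sup>2"
    by (simp add: X_def Y_def Z_def power_add power_mult[symmetric] mult.commute)
  moreover have "det (indexed_mat [0..<6] (\<lambda>c d. (if c = d then 1 else 0) - junction c d / x ^ branch_len c))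
      = (1 - 1 / X / 2)\<^sup>2 * (1 - 1 / Y / 2)\<^sup>2
        - 4 * (1 / Z / 2)\<^sup>2 * (1 / X / 2) * (1 / Y / 2) * (1 - 1 / X / 2) * (1 - 1 / Y / 2)"
  proof -
    define t where "t c = 1 / x ^ branch_len c" for c
    have t: "t 0 = 1 / X" "t 1 = 1 / X" "t 2 = 1 / Z" "t 3 = 1 / Y" "t 4 = 1 / Y" "t 5 = 1 / Z"
      by (simp_all add: t_def branch_len_def X_def Y_def Z_def)
    have "indexed_mat [0..<6] (\<lambda>c d. (if c = d then 1 else 0) - junction c d / x ^ branch_len c)
      = indexed_mat [0..<6] (\<lambda>c d. (if c = d then 1 else 0) - junction c d * t c)"
      by (simp add: t_def)
    then show ?thesis unfolding junction_mat_eq t by (simp only: det_junction_pattern)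
  qed
  moreover have "X\<^sup>2 * Y\<^sup>2 * Z\<^sup>2 * ((1 - 1 / X / 2)\<^sup>2 * (1 - 1 / Y / 2)\<^sup>2
        - 4 * (1 / Z / 2)\<^sup>2 * (1 / X / 2) * (1 / Y / 2) * (1 - 1 / X / 2) * (1 - 1 / Y / 2))
      = (X - 1/2) * (Y - 1/2) * (Z\<^sup>2 * (X - 1/2) * (Y - 1/2) - 1/4)"
    using \<open>X \<noteq> 0\<close> \<open>Y \<noteq> 0\<close> \<open>Z \<noteq> 0\<close> by (simp add: field_simps power2_eq_square)
  moreover have "poly (cycle_factor a * cycle_factor b * junction_factor (k - 1) a b) x
      = (X - 1/2) * (Y - 1/2) * (Z\<^sup>2 * (X - 1/2) * (Y - 1/2) - 1/4)"
  proof -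
    have "x ^ (2 * (k - 1)) = Z\<^sup>2" by (simp add: Z_def mult.commute flip: power_mult)
    then show ?thesis by (simp add: junction_factor_def cycle_factor_def poly_monom X_def Y_def)
  qed
  ultimately show "poly (char_poly (nb_matrix E)) x = poly (cycle_factor a * cycle_factor b * junction_factor (k - 1) a b) x"
    unfolding poly_char_poly_nb_matrix[OF \<open>x \<noteq> 0\<close>] by (simp only:)
qed

end

section \<open>The balanced barbell is extremal\<close>

lemma balanced_sum_squares_le:
  fixes a b n :: nat
  assumes "a + b = n"
  shows "((n + 1) div 2) ^ 2 + (n div 2) ^ 2 \<le> a ^ 2 + b ^ 2"
proof -
  define e :: int where "e = (if even n then 0 else 1)"
  define D where "D = (int a - int b) ^ 2"
  have "e \<le> D"
  proof (cases "even n")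
    case False
    then have "0 < D" using assms by (auto simp: D_def)
    with False show ?thesis by (simp add: e_def)
  qed (simp add: e_def D_def)
  moreover have "2 * int (((n + 1) div 2) ^ 2 + (n div 2) ^ 2) = int n ^ 2 + e"
    by (cases "even n") (auto elim!: evenE oddE simp: e_def power2_eq_square algebra_simps)
  moreover have "2 * int (a ^ 2 + b ^ 2) = int n ^ 2 + D"
    using assms by (auto simp: D_def power2_eq_square algebra_simps)
  ultimately have "2 * int (((n + 1) div 2) ^ 2 + (n div 2) ^ 2) \<le> 2 * int (a ^ 2 + b ^ 2)"
    by simp
  then show ?thesis by (simp only: mult_le_cancel_left_pos of_nat_le_iff zero_less_numeral)
qed

text \<open>The inequality below with the denominator \<open>4 (n + 1)\<close> cleared.\<close>

lemma barbell_kemeny_le_balanced_nat: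
  fixes a b n :: nat
  assumes "a + b \<le> n"
  shows "4 * (n + 1) * (a + b) + ((n + 1) div 2) ^ 2 + (n div 2) ^ 2 \<le> 4 * (n + 1) * n + a ^ 2 + b ^ 2"
proof (cases "a + b = n")
  case True
  then show ?thesis using balanced_sum_squares_le[OF True] by simp
next
  case False
  then obtain t where n: "n = a + b + t" and t: "0 < t"
    using assms by (metis add_diff_inverse_nat less_diff_conv not_less add_0_right gr0I)
  have "2 * (((n + 1) div 2) ^ 2 + (n div 2) ^ 2) \<le> n ^ 2 + 1"
    by (cases "even n") (auto elim!: evenE oddE simp: power2_eq_square algebra_simps)
  moreover have "(a + b) ^ 2 \<le> 2 * (a ^ 2 + b ^ 2)"
    using balanced_sum_squares_le[of a b "a + b"] by (cases "even (a + b)")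
      (auto elim!: evenE oddE simp: power2_eq_square algebra_simps)
  moreover have "2 * (a + b) * t + t ^ 2 + 1 \<le> 8 * (n + 1) * t"
    using t by (simp add: n power2_eq_square algebra_simps)
  ultimately show ?thesis by (simp add: n power2_eq_square algebra_simps)
qed

lemma barbell_kemeny_le_balanced:
  assumes "a + b \<le> n"
  shows "barbell_kemeny (n + 1) a b \<le> barbell_kemeny (n + 1) ((n + 1) div 2) (n div 2)"
proof -
  define c d where "c = (n + 1) div 2" and "d = n div 2"
  define N where "N = real (n + 1)"
  have "N > 0" by (simp add: N_def)
  have "real (4 * (n + 1) * (a + b) + c ^ 2 + d ^ 2) \<le> real (4 * (n + 1) * n + a ^ 2 + b ^ 2)"
    using barbell_kemeny_le_balanced_nat[OF assms] unfolding c_def d_def by (simp only: of_nat_le_iff)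
  then have "4 * N * (real a + real b) - (real a ^ 2 + real b ^ 2) \<le> 4 * N * real n - (real c ^ 2 + real d ^ 2)"
    by (simp add: N_def algebra_simps)
  then have "(4 * N * (real a + real b) - (real a ^ 2 + real b ^ 2)) / (2 * N)
      \<le> (4 * N * real n - (real c ^ 2 + real d ^ 2)) / (2 * N)"
    using \<open>N > 0\<close> by (intro divide_right_mono) simp_all
  moreover have "(4 * N * x - y) / (2 * N) = 2 * x - y / (2 * N)" for x y
    using \<open>N > 0\<close> by (simp add: field_simps)
  moreover have "real c + real d = real n" by (simp add: c_def d_def flip: of_nat_add)
  ultimately show ?thesis
    unfolding barbell_kemeny_def c_def[symmetric] d_def[symmetric] N_def[symmetric] by simp
qed

lemma barbell_kemeny_balanced:
  "barbell_kemeny (n + 1) ((n + 1) div 2) (n div 2)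
     = (11 * real n ^ 2 + 14 * real n + (if even n then 2 else 1)) / (4 * (real n + 1))"
  by (cases "even n") (auto elim!: evenE oddE simp: barbell_kemeny_def field_simps power2_eq_square)

lemma kemeny_nb_cycle_barbell:
  assumes "a \<ge> 3" "b \<ge> 3" "k \<ge> 2"
  shows "kemeny_nb (cb_edges k a b) = complex_of_real (barbell_kemeny (a + b + k - 1) a b)"
proof -
  interpret cycle_barbell k a b using assms by unfold_locales
  have "k - 1 + a + b = a + b + k - 1" using assms by simp
  then show ?thesis
    unfolding kemeny_nb_def using kemeny_of_barbell_char_poly[OF char_poly_nb_matrix] assms by simp
qed

theorem theorem5p7:
  fixes n :: nat
  assumes "n \<ge> 6"
  shows "(\<forall>k a b. a \<ge> 3 \<and> b \<ge> 3 \<and> k \<ge> 2 \<and> a + b + k - 2 = n \<longrightarrow>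
            Re (kemeny_nb (cb_edges k a b)) \<le> Re (kemeny_nb (cb_edges 2 ((n + 1) div 2) (n div 2))))
       \<and> (even n \<longrightarrow> kemeny_nb (cb_edges 2 (n div 2) (n div 2))
              = complex_of_real ((11 * real n ^ 2 + 14 * real n + 2) / (4 * (real n + 1))))
       \<and> (odd n \<longrightarrow> kemeny_nb (cb_edges 2 ((n + 1) div 2) ((n - 1) div 2))
              = complex_of_real ((11 * real n ^ 2 + 14 * real n + 1) / (4 * (real n + 1))))"
proof -
  let ?K = "kemeny_nb (cb_edges 2 ((n + 1) div 2) (n div 2))"
  have "(n + 1) div 2 + n div 2 + 2 - 1 = n + 1" by simp
  then have balanced: "?K = complex_of_real (barbell_kemeny (n + 1) ((n + 1) div 2) (n div 2))"
    using kemeny_nb_cycle_barbell[of "(n + 1) div 2" "n div 2" 2] assms by simp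
  have "Re (kemeny_nb (cb_edges k a b)) \<le> Re ?K" if "a \<ge> 3" "b \<ge> 3" "k \<ge> 2" "a + b + k - 2 = n" for k a b
  proof -
    have "a + b + k - 1 = n + 1" "a + b \<le> n" using that by simp_all
    then show ?thesis
      using kemeny_nb_cycle_barbell[OF that(1-3)] balanced barbell_kemeny_le_balanced by simp
  qed
  moreover have "?K = complex_of_real ((11 * real n ^ 2 + 14 * real n + (if even n then 2 else 1)) / (4 * (real n + 1)))"
    unfolding balanced barbell_kemeny_balanced ..
  moreover have "(n + 1) div 2 = n div 2" if "even n" using that by simp
  moreover have "(n - 1) div 2 = n div 2" if "odd n" using that by (auto elim: oddE)
  ultimately show ?thesis by auto
qed

end
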